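(* Let $K=2$ and suppose that for every horizon $T$ (a multiple of $100$) a valid pair $(\eta,\gamma)=(\eta_T,\gamma_T)$ in the non-trivial regime is chosen. Then there exists $T_0$ such that for all $T\ge T_0$, WSU-UX run on the two-phase loss sequence satisfies $$\mathbb{E}\Bigl[\sum_{t=1}^T\Bigl(\hat\ell_{t,1}-\sum_{j\in\{1,2\}}\pi_{t,j}\hat\ell_{t,j}\Bigr)^2\Bigr]\ge \frac{1}{1600}\,\frac{TK}{\gamma}.$$
   Context: WSU-UX. Fix integers $K\ge 2$ and $T\ge 1$ and hyperparameters $\eta,\gamma$. The pair $(\eta,\gamma)$ is called valid if $\eta,\gamma\in(0,1/2)$ and $\eta K/\gamma\le 1/2$. Given a fixed loss sequence $\ell_t\in[0,1]^K$, WSU-UX sets $\pi_{1,i}=1/K$ and in each round $t$: forms $\tilde\pi_{t,i}=(1-\gamma)\pi_{t,i}+\gamma/K$; draws $I_t$ with $\Pr(I_t=i\mid\mathcal F_{t-1})=\tilde\pi_{t,i}$; sets $\hat\ell_{t,i}=\ell_{t,i}\mathbf 1[I_t=i]/\tilde\pi_{t,i}$; and updates $\pi_{t+1,i}=\pi_{t,i}\bigl(1-\eta(\hat\ell_{t,i}-\sum_{j}\pi_{t,j}\hat\ell_{t,j})\bigr)$; $\mathcal F_t$ is the history generated by $I_1,\dots,I_t$. Non-trivial regime: $\eta\ge T^{-2/3}$ and $\gamma\le T^{-1/3}$. Two-phase loss sequence ($K=2$, $T$ a multiple of $100$, $T_1=T/100$): $\ell_{t,1}=1,\ell_{t,2}=0$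 for $1\le t\le T_1$ and $\ell_{t,1}=0,\ell_{t,2}=1$ for $T_1<t\le T$. *)

theory Defs
  imports Complex_Main
begin

text \<open>WSU-UX with K arms indexed 1..K. Loss sequence l t i (round t >= 1, arm i).
  Weights p :: nat => real.\<close>

definition valid_pair :: "nat \<Rightarrow> real \<Rightarrow> real \<Rightarrow> bool" where
  "valid_pair K \<eta> \<gamma> \<longleftrightarrow> 0 < \<eta> \<and> \<eta> < 1/2 \<and> 0 < \<gamma> \<and> \<gamma> < 1/2 \<and> \<eta> * real K / \<gamma> \<le> 1/2"

definition nontrivial_regime :: "nat \<Rightarrow> real \<Rightarrow> real \<Rightarrow> bool" where
  "nontrivial_regime T \<eta> \<gamma> \<longleftrightarrow> \<eta> \<ge> real T powr (-2/3) \<and> \<gamma> \<le> real T powr (-1/3)"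

definition pi_tilde :: "nat \<Rightarrow> real \<Rightarrow> (nat \<Rightarrow> real) \<Rightarrow> nat \<Rightarrow> real" where
  "pi_tilde K \<gamma> p i = (1 - \<gamma>) * p i + \<gamma> / real K"

definition lhat :: "nat \<Rightarrow> real \<Rightarrow> (nat \<Rightarrow> nat \<Rightarrow> real) \<Rightarrow> (nat \<Rightarrow> real) \<Rightarrow> nat \<Rightarrow> nat \<Rightarrow> nat \<Rightarrow> real" where
  "lhat K \<gamma> l p t I i = (if I = i then l t i / pi_tilde K \<gamma> p i else 0)"

definition wsu_update :: "nat \<Rightarrow> real \<Rightarrow> real \<Rightarrow> (nat \<Rightarrow> nat \<Rightarrow> real) \<Rightarrow> (nat \<Rightarrow> real) \<Rightarrow> nat \<Rightarrow> nat \<Rightarrow> nat \<Rightarrow> real" where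
  "wsu_update K \<eta> \<gamma> l p t I = (\<lambda>i. p i * (1 - \<eta> * (lhat K \<gamma> l p t I i
       - (\<Sum>j\<in>{1..K}. p j * lhat K \<gamma> l p t I j))))"

text \<open>wsu_E K eta gamma l n t p: expected value of
  sum over rounds t..t+n-1 of (lhat_{s,1} - sum_j pi_{s,j} lhat_{s,j})^2,
  starting in round t with weights p, where I_s is drawn from pi_tilde.\<close>
primrec wsu_E :: "nat \<Rightarrow> real \<Rightarrow> real \<Rightarrow> (nat \<Rightarrow> nat \<Rightarrow> real) \<Rightarrow> nat \<Rightarrow> nat \<Rightarrow> (nat \<Rightarrow> real) \<Rightarrow> real" where
  "wsu_E K \<eta> \<gamma> l 0 t p = 0"
| "wsu_E K \<eta> \<gamma> l (Suc n) t p =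
     (\<Sum>I\<in>{1..K}. pi_tilde K \<gamma> p I *
        ((lhat K \<gamma> l p t I 1 - (\<Sum>j\<in>{1..K}. p j * lhat K \<gamma> l p t I j))\<^sup>2
         + wsu_E K \<eta> \<gamma> l n (Suc t) (wsu_update K \<eta> \<gamma> l p t I)))"

definition wsu_expected_sq :: "nat \<Rightarrow> real \<Rightarrow> real \<Rightarrow> (nat \<Rightarrow> nat \<Rightarrow> real) \<Rightarrow> nat \<Rightarrow> real" where
  "wsu_expected_sq K \<eta> \<gamma> l T = wsu_E K \<eta> \<gamma> l T 1 (\<lambda>i. 1 / real K)"

definition two_phase :: "nat \<Rightarrow> nat \<Rightarrow> nat \<Rightarrow> real" where
  "two_phase T t i = (if t \<le> T div 100 then (if i = 1 then 1 else 0) else (if i = 1 then 0 else 1))"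

end

theory Submission
  imports Defs "HOL-Real_Asymp.Real_Asymp"
begin

text \<open>During the first phase arm 1 has loss 1, and its weight \<open>\<pi>\<^sub>1\<close>, starting at 1/2,
  shrinks in expectation by a factor \<open>1 - \<eta>/2\<close> per round. Each such round contributes
  \<open>\<pi>\<^sub>2\<^sup>2\<close> divided by the sampling probability of arm 1 to the expected square; bounding the
  reciprocal of that probability by its tangent line at \<open>\<gamma>\<close> gives a contribution that is affine in
  \<open>\<pi>\<^sub>1\<close>, so a lower bound affine in \<open>\<pi>\<^sub>1\<close> survives taking expectations round by round.
  Once \<open>(1 - \<eta>/2)\<^sup>k \<le> \<gamma>\<close>, which holds after \<open>T/200\<close> rounds when \<open>\<eta> \<ge> T\<^sup>-\<^sup>2\<^sup>/\<^sup>3\<close>, every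
  further round of the first phase contributes at least \<open>1/(4\<gamma>)\<close>; the second phase contributes
  a nonnegative amount.\<close>

definition prob_weights :: "nat \<Rightarrow> (nat \<Rightarrow> real) \<Rightarrow> bool" where
  "prob_weights K p \<longleftrightarrow> (\<forall>i\<in>{1..K}. 0 \<le> p i) \<and> (\<Sum>i\<in>{1..K}. p i) = 1"

lemma sum_atLeastAtMost_1_2: "(\<Sum>i\<in>{1..2::nat}. f i) = f 1 + f 2"
  by (simp add: numeral_2_eq_2)

lemma prob_weights_2_iff: "prob_weights 2 p \<longleftrightarrow> 0 \<le> p 1 \<and> 0 \<le> p 2 \<and> p 1 + p 2 = 1"
  by (auto simp: prob_weights_def sum_atLeastAtMost_1_2 numeral_2_eq_2 le_Suc_eq)

lemma pi_tilde_ge: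
  assumes "0 \<le> p i" "\<gamma> \<le> 1"
  shows "\<gamma> / real K \<le> pi_tilde K \<gamma> p i"
  using assms by (simp add: pi_tilde_def)

lemma wsu_update_zero_loss:
  assumes "l t I = 0"
  shows "wsu_update K \<eta> \<gamma> l p t I = p"
proof -
  have "lhat K \<gamma> l p t I = (\<lambda>_. 0)" using assms by (auto simp: lhat_def)
  then show ?thesis by (simp add: wsu_update_def)
qed

lemma wsu_update_prob_weights:
  assumes vp: "valid_pair K \<eta> \<gamma>" and p: "prob_weights K p" and I: "I \<in> {1..K}"
    and l: "\<And>s i. i \<in> {1..K} \<Longrightarrow> 0 \<le> l s i \<and> l s i \<le> 1"
  shows "prob_weights K (wsu_update K \<eta> \<gamma> l p t I)"
proof -
  define lh where "lh = lhat K \<gamma> l p t I"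
  define S where "S = (\<Sum>j\<in>{1..K}. p j * lh j)"
  have K0: "0 < real K" using I by auto
  have \<gamma>: "0 < \<gamma>" "\<gamma> \<le> 1" and \<eta>: "0 < \<eta>" "\<eta> * real K / \<gamma> \<le> 1/2"
    using vp by (auto simp: valid_pair_def)
  have p0: "\<And>i. i \<in> {1..K} \<Longrightarrow> 0 \<le> p i" using p by (simp add: prob_weights_def)
  have pt: "\<gamma> / real K \<le> pi_tilde K \<gamma> p i" if "i \<in> {1..K}" for i
    using pi_tilde_ge[of p i \<gamma> K] p0[OF that] \<gamma>(2) by simp
  have pt0: "0 < pi_tilde K \<gamma> p i" if "i \<in> {1..K}" for i
    using less_le_trans[OF divide_pos_pos[OF \<gamma>(1) K0] pt[OF that]] .
  have lh0: "0 \<le> lh i" if "i \<in> {1..K}" for i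
    using l[OF that] pt0[OF that] by (simp add: lh_def lhat_def)
  have \<eta>lh: "\<eta> * lh i \<le> 1/2" if "i \<in> {1..K}" for i
  proof -
    have "lh i \<le> 1 / pi_tilde K \<gamma> p i"
      using l[OF that] pt0[OF that] by (auto simp: lh_def lhat_def divide_right_mono)
    also have "\<dots> \<le> 1 / (\<gamma> / real K)"
      using pt[OF that] pt0[OF that] \<gamma>(1) K0 by (intro divide_left_mono) auto
    also have "\<dots> = real K / \<gamma>" by simp
    finally have "\<eta> * lh i \<le> \<eta> * (real K / \<gamma>)" using \<eta>(1) by (intro mult_left_mono) auto
    then show ?thesis using \<eta>(2) by (metis order_trans times_divide_eq_right)
  qed
  have S0: "0 \<le> S" unfolding S_def using p0 lh0 by (auto intro: sum_nonneg)
  have upd: "wsu_update K \<eta> \<gamma> l p t I i = p i * (1 - \<eta> * (lh i - S))" for i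
    by (simp add: wsu_update_def lh_def S_def)
  have "(\<Sum>i\<in>{1..K}. p i * (1 - \<eta> * (lh i - S)))
      = (\<Sum>i\<in>{1..K}. p i - \<eta> * (p i * lh i) + (\<eta> * S) * p i)"
    by (simp add: algebra_simps)
  also have "\<dots> = (\<Sum>i\<in>{1..K}. p i) - \<eta> * S + \<eta> * S * (\<Sum>i\<in>{1..K}. p i)"
    by (simp add: S_def sum.distrib sum_subtractf sum_distrib_left)
  finally have "(\<Sum>i\<in>{1..K}. p i * (1 - \<eta> * (lh i - S))) = 1"
    using p by (simp add: prob_weights_def)
  moreover have "0 \<le> p i * (1 - \<eta> * (lh i - S))" if "i \<in> {1..K}" for i
  proof -
    have "0 \<le> \<eta> * S" using S0 \<eta>(1) by simp
    then have "0 \<le> 1 - \<eta> * (lh i - S)" using \<eta>lh[OF that] by (simp add: right_diff_distrib)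
    then show ?thesis using p0[OF that] by simp
  qed
  ultimately show ?thesis by (simp add: prob_weights_def upd)
qed

lemma wsu_E_nonneg:
  assumes vp: "valid_pair K \<eta> \<gamma>"
    and l: "\<And>s i. i \<in> {1..K} \<Longrightarrow> 0 \<le> l s i \<and> l s i \<le> 1"
  shows "prob_weights K p \<Longrightarrow> 0 \<le> wsu_E K \<eta> \<gamma> l n t p"
proof (induction n arbitrary: t p)
  case 0
  then show ?case by simp
next
  case (Suc n)
  have "0 \<le> pi_tilde K \<gamma> p I" if "I \<in> {1..K}" for I
  proof -
    have "0 \<le> \<gamma> / real K" using vp by (simp add: valid_pair_def)
    also have "\<dots> \<le> pi_tilde K \<gamma> p I"
      using Suc.prems that vp by (intro pi_tilde_ge) (auto simp: prob_weights_def valid_pair_def)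
    finally show ?thesis .
  qed
  moreover have "0 \<le> wsu_E K \<eta> \<gamma> l n (Suc t) (wsu_update K \<eta> \<gamma> l p t I)" if "I \<in> {1..K}" for I
    using Suc.IH wsu_update_prob_weights[OF vp Suc.prems that, where l = l and t = t, OF l] by blast
  ultimately show ?case by (auto intro!: sum_nonneg)
qed

lemma pi_tilde_2_sum:
  assumes "p 1 + p 2 = 1"
  shows "pi_tilde 2 \<gamma> p 1 + pi_tilde 2 \<gamma> p 2 = 1"
proof -
  have "pi_tilde 2 \<gamma> p 1 + pi_tilde 2 \<gamma> p 2 = (1 - \<gamma>) * (p 1 + p 2) + \<gamma>"
    by (simp add: pi_tilde_def algebra_simps)
  then show ?thesis using assms by simp
qed

lemma first_phase_round_term:
  fixes x \<gamma> c :: real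
  assumes "0 \<le> x" "x \<le> 1/2" "0 < \<gamma>" "0 \<le> c \<and> c \<le> 1"
  shows "c * (3/(8*\<gamma>) - x/(4*\<gamma>\<^sup>2)) \<le> (1 - x)\<^sup>2 / ((1 - \<gamma>) * x + \<gamma>/2)"
proof -
  define y where "y = x + \<gamma>/2"
  have y0: "0 < y" using assms by (simp add: y_def)
  \<comment> \<open>tangent line of the convex function \<open>1/y\<close> at \<open>y = \<gamma>\<close>\<close>
  have tangent: "2/\<gamma> - y/\<gamma>\<^sup>2 \<le> 1/y"
  proof -
    have "1/y - (2/\<gamma> - y/\<gamma>\<^sup>2) = (y - \<gamma>)\<^sup>2 / (y * \<gamma>\<^sup>2)"
      using y0 assms(3) by (simp add: field_simps power2_eq_square)
    moreover have "0 \<le> (y - \<gamma>)\<^sup>2 / (y * \<gamma>\<^sup>2)" using y0 by simp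
    ultimately show ?thesis by linarith
  qed
  have "(1 - \<gamma>) * x + \<gamma>/2 = x + \<gamma> * (1/2 - x)" by (simp add: algebra_simps)
  moreover have "0 \<le> \<gamma> * (1/2 - x)" using assms by simp
  ultimately have q0: "0 < (1 - \<gamma>) * x + \<gamma>/2"
    using assms by (cases "x = 0") (simp, linarith)
  have qy: "(1 - \<gamma>) * x + \<gamma>/2 \<le> y" using assms by (simp add: y_def algebra_simps)
  have "3/(8*\<gamma>) - x/(4*\<gamma>\<^sup>2) = (2/\<gamma> - y/\<gamma>\<^sup>2) / 4"
    using assms(3) by (simp add: y_def field_simps power2_eq_square)
  also have "\<dots> \<le> (1/4) / y" using tangent by simp
  also have "\<dots> \<le> (1/4) / ((1 - \<gamma>) * x + \<gamma>/2)" using q0 qy by (intro divide_left_mono) auto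
  also have "\<dots> \<le> (1 - x)\<^sup>2 / ((1 - \<gamma>) * x + \<gamma>/2)"
  proof -
    have "1/2 \<le> 1 - x" using assms by simp
    from power_mono[OF this, of 2] have "1/4 \<le> (1 - x)\<^sup>2" by (simp add: power2_eq_square)
    then show ?thesis using q0 by (intro divide_right_mono) auto
  qed
  finally have bound: "3/(8*\<gamma>) - x/(4*\<gamma>\<^sup>2) \<le> (1 - x)\<^sup>2 / ((1 - \<gamma>) * x + \<gamma>/2)" .
  have "c * b \<le> max 0 b" for b
    using assms(4) by (cases "0 \<le> b") (auto simp: mult_left_le_one_le mult_nonneg_nonpos)
  moreover have "0 \<le> (1 - x)\<^sup>2 / ((1 - \<gamma>) * x + \<gamma>/2)" using q0 by simp
  ultimately show ?thesis using bound by (meson max.boundedI order_trans)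
qed

lemma first_phase_update_arm1:
  assumes "t \<le> T div 100" "p 1 + p 2 = 1"
  shows "wsu_update 2 \<eta> \<gamma> (two_phase T) p t 1 1 = p 1 * (1 - \<eta> * p 2 / pi_tilde 2 \<gamma> p 1)"
proof -
  have p2: "p 2 = 1 - p 1" using assms(2) by simp
  have lh: "lhat 2 \<gamma> (two_phase T) p t 1 1 = 1 / pi_tilde 2 \<gamma> p 1"
    "lhat 2 \<gamma> (two_phase T) p t 1 2 = 0"
    using assms(1) by (simp_all add: lhat_def two_phase_def)
  show ?thesis
    unfolding wsu_update_def sum_atLeastAtMost_1_2 lh by (simp add: p2 diff_divide_distrib[symmetric])
qed

lemma first_phase_wsu_E_Suc:
  assumes "t \<le> T div 100" "p 1 + p 2 = 1" "pi_tilde 2 \<gamma> p 1 \<noteq> 0"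
  shows "wsu_E 2 \<eta> \<gamma> (two_phase T) (Suc n) t p
    = (p 2)\<^sup>2 / pi_tilde 2 \<gamma> p 1
      + pi_tilde 2 \<gamma> p 1 * wsu_E 2 \<eta> \<gamma> (two_phase T) n (Suc t) (wsu_update 2 \<eta> \<gamma> (two_phase T) p t 1)
      + pi_tilde 2 \<gamma> p 2 * wsu_E 2 \<eta> \<gamma> (two_phase T) n (Suc t) p"
proof -
  define q where "q = pi_tilde 2 \<gamma> p 1"
  have lh: "lhat 2 \<gamma> (two_phase T) p t 1 1 = 1/q" "lhat 2 \<gamma> (two_phase T) p t 1 2 = 0"
    "lhat 2 \<gamma> (two_phase T) p t 2 1 = 0" "lhat 2 \<gamma> (two_phase T) p t 2 2 = 0"
    using assms(1) by (simp_all add: lhat_def two_phase_def q_def)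
  have sq: "q * (1/q - p 1 * (1/q))\<^sup>2 = (p 2)\<^sup>2 / q"
  proof -
    have p2: "p 2 = 1 - p 1" using assms(2) by simp
    show ?thesis using assms(3) by (simp add: p2 q_def field_simps power2_eq_square)
  qed
  have "wsu_update 2 \<eta> \<gamma> (two_phase T) p t 2 = p"
    using assms(1) by (intro wsu_update_zero_loss) (simp add: two_phase_def)
  then show ?thesis using sq
    unfolding wsu_E.simps(2) sum_atLeastAtMost_1_2 lh q_def[symmetric]
    by (simp add: distrib_left add.assoc)
qed

lemma first_phase_expected_weight_le:
  assumes "t \<le> T div 100" "prob_weights 2 p" "1/2 \<le> p 2" "0 < \<eta>" "0 < \<gamma>" "\<gamma> \<le> 1"
  shows "pi_tilde 2 \<gamma> p 1 * wsu_update 2 \<eta> \<gamma> (two_phase T) p t 1 1 + pi_tilde 2 \<gamma> p 2 * p 1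
    \<le> (1 - \<eta>/2) * p 1"
proof -
  have p: "0 \<le> p 1" "p 1 + p 2 = 1" using assms(2) by (simp_all add: prob_weights_2_iff)
  have q0: "0 < pi_tilde 2 \<gamma> p 1"
    using pi_tilde_ge[of p 1 \<gamma> 2] p(1) assms(5,6) by simp
  have "pi_tilde 2 \<gamma> p 1 * wsu_update 2 \<eta> \<gamma> (two_phase T) p t 1 1 + pi_tilde 2 \<gamma> p 2 * p 1
      = p 1 * (pi_tilde 2 \<gamma> p 1 + pi_tilde 2 \<gamma> p 2) - \<eta> * p 1 * p 2"
    unfolding first_phase_update_arm1[OF assms(1) p(2)] using q0 by (simp add: field_simps)
  also have "\<dots> = p 1 - \<eta> * p 1 * p 2" using pi_tilde_2_sum[OF p(2)] by simp
  also have "\<dots> \<le> (1 - \<eta>/2) * p 1"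
    using mult_left_mono[OF assms(3), of "\<eta> * p 1"] assms(4) p(1) by (simp add: algebra_simps)
  finally show ?thesis .
qed

text \<open>An affine lower bound, in the current weight \<open>x\<close> of arm 1, for the expected remaining sum;
  the weights \<open>w\<close> select the rounds that are counted.\<close>
definition first_phase_bound :: "(nat \<Rightarrow> real) \<Rightarrow> real \<Rightarrow> real \<Rightarrow> nat \<Rightarrow> nat \<Rightarrow> real \<Rightarrow> real" where
  "first_phase_bound w \<eta> \<gamma> n t x = (\<Sum>k<n. w (t + k) * (3/(8*\<gamma>) - (1 - \<eta>/2)^k * x / (4*\<gamma>\<^sup>2)))"

lemma first_phase_bound_Suc:
  "first_phase_bound w \<eta> \<gamma> (Suc n) t x
    = w t * (3/(8*\<gamma>) - x / (4*\<gamma>\<^sup>2)) + first_phase_bound w \<eta> \<gamma> n (Suc t) ((1 - \<eta>/2) * x)"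
  unfolding first_phase_bound_def by (subst sum.lessThan_Suc_shift) (simp add: algebra_simps)

lemma first_phase_bound_convex_combination:
  assumes "a + b = 1"
  shows "a * first_phase_bound w \<eta> \<gamma> n t x + b * first_phase_bound w \<eta> \<gamma> n t y
    = first_phase_bound w \<eta> \<gamma> n t (a * x + b * y)"
proof -
  have b: "b = 1 - a" using assms by simp
  show ?thesis
    unfolding first_phase_bound_def sum_distrib_left sum.distrib[symmetric]
    by (rule sum.cong) (simp_all add: b algebra_simps add_divide_distrib diff_divide_distrib)
qed

lemma first_phase_bound_antimono:
  assumes "\<And>s. 0 \<le> w s" "\<eta> \<le> 2" "x \<le> y"
  shows "first_phase_bound w \<eta> \<gamma> n t y \<le> first_phase_bound w \<eta> \<gamma> n t x"
  unfolding first_phase_bound_def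
proof (rule sum_mono)
  fix k
  have "(1 - \<eta>/2)^k * x / (4*\<gamma>\<^sup>2) \<le> (1 - \<eta>/2)^k * y / (4*\<gamma>\<^sup>2)"
    using assms(2,3) by (intro divide_right_mono mult_left_mono) auto
  then show "w (t + k) * (3/(8*\<gamma>) - (1 - \<eta>/2)^k * y / (4*\<gamma>\<^sup>2))
      \<le> w (t + k) * (3/(8*\<gamma>) - (1 - \<eta>/2)^k * x / (4*\<gamma>\<^sup>2))"
    using assms(1) by (intro mult_left_mono) auto
qed

lemma first_phase_bound_eq_0:
  assumes "\<And>k. k < n \<Longrightarrow> w (t + k) = 0"
  shows "first_phase_bound w \<eta> \<gamma> n t x = 0"
  using assms by (simp add: first_phase_bound_def)

lemma two_phase_losses: "0 \<le> two_phase T s i \<and> two_phase T s i \<le> 1"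
  by (simp add: two_phase_def)

lemma first_phase_bound_step:
  assumes vp: "valid_pair 2 \<eta> \<gamma>" and w: "\<And>s. 0 \<le> w s \<and> w s \<le> 1"
    and t: "t \<le> T div 100" and p_prob: "prob_weights 2 p" and p1: "p 1 \<le> 1/2"
    and IH: "\<And>p. prob_weights 2 p \<Longrightarrow> p 1 \<le> 1/2 \<Longrightarrow>
      first_phase_bound w \<eta> \<gamma> n (Suc t) (p 1) \<le> wsu_E 2 \<eta> \<gamma> (two_phase T) n (Suc t) p"
  shows "first_phase_bound w \<eta> \<gamma> (Suc n) t (p 1) \<le> wsu_E 2 \<eta> \<gamma> (two_phase T) (Suc n) t p"
proof -
  have \<gamma>: "0 < \<gamma>" "\<gamma> \<le> 1" and \<eta>: "0 < \<eta>" "\<eta> \<le> 2" using vp by (auto simp: valid_pair_def)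
  have p: "0 \<le> p 1" "0 \<le> p 2" "p 1 + p 2 = 1" using p_prob by (simp_all add: prob_weights_2_iff)
  define q where "q = pi_tilde 2 \<gamma> p 1"
  define r where "r = pi_tilde 2 \<gamma> p 2"
  define p' where "p' = wsu_update 2 \<eta> \<gamma> (two_phase T) p t 1"
  have "\<gamma>/2 \<le> q" "\<gamma>/2 \<le> r" using pi_tilde_ge[of p _ \<gamma> 2] p \<gamma> by (simp_all add: q_def r_def)
  then have q0: "0 < q" and r0: "0 \<le> r" using \<gamma>(1) by linarith+
  have "0 \<le> \<eta> * p 2 / q" using q0 \<eta>(1) p(2) by simp
  then have "p' 1 \<le> p 1"
    unfolding p'_def first_phase_update_arm1[OF t p(3)] q_def[symmetric]
    using p(1) by (simp add: mult_left_le)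
  moreover have "prob_weights 2 p'"
    unfolding p'_def using wsu_update_prob_weights[OF vp p_prob _ two_phase_losses] by simp
  ultimately have IH': "first_phase_bound w \<eta> \<gamma> n (Suc t) (p' 1) \<le> wsu_E 2 \<eta> \<gamma> (two_phase T) n (Suc t) p'"
    using IH p1 by simp
  have round: "w t * (3/(8*\<gamma>) - p 1 / (4*\<gamma>\<^sup>2)) \<le> (p 2)\<^sup>2 / q"
  proof -
    have "1 - p 1 = p 2" using p(3) by simp
    then show ?thesis
      using first_phase_round_term[OF p(1) p1 \<gamma>(1) w] by (simp add: q_def pi_tilde_def)
  qed
  have drift: "q * p' 1 + r * p 1 \<le> (1 - \<eta>/2) * p 1"
    unfolding q_def r_def p'_def
    by (rule first_phase_expected_weight_le[OF t p_prob _ \<eta>(1) \<gamma>]) (use p p1 in simp)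
  have "first_phase_bound w \<eta> \<gamma> (Suc n) t (p 1)
      = w t * (3/(8*\<gamma>) - p 1 / (4*\<gamma>\<^sup>2)) + first_phase_bound w \<eta> \<gamma> n (Suc t) ((1 - \<eta>/2) * p 1)"
    by (rule first_phase_bound_Suc)
  also have "\<dots> \<le> (p 2)\<^sup>2 / q + first_phase_bound w \<eta> \<gamma> n (Suc t) (q * p' 1 + r * p 1)"
    using w by (intro add_mono round first_phase_bound_antimono[OF _ \<eta>(2) drift]) auto
  also have "\<dots> = (p 2)\<^sup>2 / q + q * first_phase_bound w \<eta> \<gamma> n (Suc t) (p' 1)
      + r * first_phase_bound w \<eta> \<gamma> n (Suc t) (p 1)"
    using first_phase_bound_convex_combination[OF pi_tilde_2_sum[OF p(3)]] by (simp add: q_def r_def)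
  also have "\<dots> \<le> (p 2)\<^sup>2 / q + q * wsu_E 2 \<eta> \<gamma> (two_phase T) n (Suc t) p'
      + r * wsu_E 2 \<eta> \<gamma> (two_phase T) n (Suc t) p"
    using mult_left_mono[OF IH' less_imp_le[OF q0]] mult_left_mono[OF IH[OF p_prob p1] r0] by linarith
  also have "\<dots> = wsu_E 2 \<eta> \<gamma> (two_phase T) (Suc n) t p"
    using first_phase_wsu_E_Suc[OF t p(3)] q0 by (simp add: q_def r_def p'_def)
  finally show ?thesis .
qed

lemma wsu_E_two_phase_ge_first_phase_bound:
  assumes vp: "valid_pair 2 \<eta> \<gamma>" and w: "\<And>s. 0 \<le> w s \<and> w s \<le> 1"
    and w_late: "\<And>s. T div 100 < s \<Longrightarrow> w s = 0"
  shows "prob_weights 2 p \<Longrightarrow> (t \<le> T div 100 \<Longrightarrow> p 1 \<le> 1/2) \<Longrightarrow>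
    first_phase_bound w \<eta> \<gamma> n t (p 1) \<le> wsu_E 2 \<eta> \<gamma> (two_phase T) n t p"
proof (induction n arbitrary: t p)
  case 0
  then show ?case by (simp add: first_phase_bound_def)
next
  case (Suc n)
  show ?case
  proof (cases "t \<le> T div 100")
    case True
    then show ?thesis
      using first_phase_bound_step[OF vp w True Suc.prems(1)] Suc by simp
  next
    case False
    then have "first_phase_bound w \<eta> \<gamma> (Suc n) t (p 1) = 0"
      by (intro first_phase_bound_eq_0 w_late) simp
    moreover have "0 \<le> wsu_E 2 \<eta> \<gamma> (two_phase T) (Suc n) t p"
      by (rule wsu_E_nonneg[OF vp two_phase_losses Suc.prems(1)])
    ultimately show ?thesis by simp
  qed
qed

lemma first_phase_bound_window_ge:
  assumes "0 < \<gamma>" "0 \<le> \<eta>" "\<eta> \<le> 2" "(1 - \<eta>/2)^m \<le> \<gamma>" "T\<^sub>1 \<le> n"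
  shows "real (T\<^sub>1 - m) / (4*\<gamma>)
    \<le> first_phase_bound (\<lambda>s. if m < s \<and> s \<le> T\<^sub>1 then 1 else 0) \<eta> \<gamma> n 1 (1/2)"
proof -
  define f where "f k = (if m < 1 + k \<and> 1 + k \<le> T\<^sub>1 then 1 else 0)
    * (3/(8*\<gamma>) - (1 - \<eta>/2)^k * (1/2) / (4*\<gamma>\<^sup>2))" for k
  have "1/(4*\<gamma>) \<le> f k" if k: "k \<in> {m..<T\<^sub>1}" for k
  proof -
    have "(1 - \<eta>/2)^k \<le> (1 - \<eta>/2)^m" using k assms(2,3) by (intro power_decreasing) auto
    then have "(1 - \<eta>/2)^k * (1/2) / (4*\<gamma>\<^sup>2) \<le> \<gamma> * (1/2) / (4*\<gamma>\<^sup>2)"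
      using assms(4) by (intro divide_right_mono mult_right_mono) auto
    also have "\<dots> = 1/(8*\<gamma>)" using assms(1) by (simp add: field_simps power2_eq_square)
    finally show ?thesis using k by (simp add: f_def field_simps)
  qed
  then have "real (T\<^sub>1 - m) / (4*\<gamma>) \<le> (\<Sum>k\<in>{m..<T\<^sub>1}. f k)"
    using sum_mono[of "{m..<T\<^sub>1}" "\<lambda>_. 1/(4*\<gamma>)" f] by simp
  also have "\<dots> = (\<Sum>k<n. f k)"
    using assms(5) by (intro sum.mono_neutral_left) (auto simp: f_def)
  finally show ?thesis by (simp add: first_phase_bound_def f_def)
qed

lemma power_one_minus_half_le_exp:
  assumes "\<eta> \<le> 2"
  shows "(1 - \<eta>/2)^m \<le> exp (- \<eta> * real m / 2)"
proof -
  have "(1 - \<eta>/2)^m \<le> exp (- \<eta>/2)^m"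
    using assms exp_ge_add_one_self[of "- \<eta>/2"] by (intro power_mono) auto
  then show ?thesis by (simp add: exp_of_nat_mult[symmetric] algebra_simps)
qed

lemma eventually_first_phase_decay:
  "\<forall>\<^sub>F T in sequentially. \<forall>\<eta> \<gamma>. real T powr (-2/3) \<le> \<eta> \<longrightarrow> \<eta> \<le> \<gamma>/4 \<longrightarrow> \<eta> \<le> 2 \<longrightarrow>
     (1 - \<eta>/2)^(T div 200) \<le> \<gamma>"
proof -
  have "\<forall>\<^sub>F T in sequentially.
      exp (- (real T powr (-2/3)) * (real T/200 - 1) / 2) \<le> 4 * real T powr (-2/3)"
    by real_asymp
  then show ?thesis
  proof (rule eventually_mono, intro allI impI)
    fix T :: nat and \<eta> \<gamma> :: real
    assume decay: "exp (- (real T powr (-2/3)) * (real T/200 - 1) / 2) \<le> 4 * real T powr (-2/3)"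
      and \<eta>: "real T powr (-2/3) \<le> \<eta>" "\<eta> \<le> \<gamma>/4" "\<eta> \<le> 2"
    have "real T powr (-2/3) * (real T/200 - 1) \<le> real T powr (-2/3) * real (T div 200)"
      by (intro mult_left_mono) auto
    also have "\<dots> \<le> \<eta> * real (T div 200)" using \<eta>(1) by (intro mult_right_mono) auto
    finally have "real T powr (-2/3) * (real T/200 - 1) \<le> \<eta> * real (T div 200)" .
    then have "exp (- \<eta> * real (T div 200) / 2) \<le> exp (- (real T powr (-2/3)) * (real T/200 - 1) / 2)"
      by simp
    then show "(1 - \<eta>/2)^(T div 200) \<le> \<gamma>"
      using power_one_minus_half_le_exp[OF \<eta>(3), of "T div 200"] decay \<eta> by linarith
  qed
qed

theorem claim2:
  fixes \<eta> \<gamma> :: "nat \<Rightarrow> real"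
  assumes "\<And>T. T \<ge> 1 \<Longrightarrow> 100 dvd T \<Longrightarrow>
             valid_pair 2 (\<eta> T) (\<gamma> T) \<and> nontrivial_regime T (\<eta> T) (\<gamma> T)"
  shows "\<exists>T0. \<forall>T\<ge>T0. 100 dvd T \<longrightarrow>
           wsu_expected_sq 2 (\<eta> T) (\<gamma> T) (two_phase T) T
             \<ge> (1/1600) * (real T * 2 / \<gamma> T)"
proof -
  obtain N where N: "\<And>T \<eta> \<gamma>. N \<le> T \<Longrightarrow> real T powr (-2/3) \<le> \<eta> \<Longrightarrow> \<eta> \<le> \<gamma>/4 \<Longrightarrow> \<eta> \<le> 2 \<Longrightarrow>
      (1 - \<eta>/2)^(T div 200) \<le> \<gamma>"
    using eventually_first_phase_decay unfolding eventually_sequentially by blast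
  show ?thesis
  proof (intro exI[of _ "max 1 N"] allI impI)
    fix T assume T: "max 1 N \<le> T" and dvd: "100 dvd T"
    have vp: "valid_pair 2 (\<eta> T) (\<gamma> T)" and "nontrivial_regime T (\<eta> T) (\<gamma> T)"
      using assms[OF _ dvd] T by auto
    then have \<eta>: "real T powr (-2/3) \<le> \<eta> T" "0 \<le> \<eta> T" "\<eta> T \<le> \<gamma> T / 4" "\<eta> T \<le> 2" and \<gamma>: "0 < \<gamma> T"
      by (auto simp: valid_pair_def nontrivial_regime_def field_simps)
    define w where "w s = (if T div 200 < s \<and> s \<le> T div 100 then 1 else 0 :: real)" for s
    have "real T / 200 \<le> real (T div 100 - T div 200)" using dvd by auto
    then have "(1/1600) * (real T * 2 / \<gamma> T) \<le> real (T div 100 - T div 200) / (4 * \<gamma> T)"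
      using \<gamma> by (simp add: field_simps)
    also have "\<dots> \<le> first_phase_bound w (\<eta> T) (\<gamma> T) T 1 (1/2)"
      unfolding w_def using T
      by (intro first_phase_bound_window_ge[OF \<gamma> \<eta>(2,4) N[OF _ \<eta>(1,3,4)]]) auto
    also have "\<dots> \<le> wsu_expected_sq 2 (\<eta> T) (\<gamma> T) (two_phase T) T"
      using wsu_E_two_phase_ge_first_phase_bound[OF vp, of w T "\<lambda>_. 1/2" 1 T]
      by (simp add: wsu_expected_sq_def w_def prob_weights_2_iff)
    finally show "(1/1600) * (real T * 2 / \<gamma> T) \<le> wsu_expected_sq 2 (\<eta> T) (\<gamma> T) (two_phase T) T" .
  qed
qed

end
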